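(* Let $K\subseteq\mathbb R^2$ be a compact set containing no array on three points. For each $l\in\mathbb N$ and each $\alpha>0$ there exists $n_0\in\mathbb N$ such that for all $n\ge n_0$ the following holds: if $u_0u_1\ldots u_k$ is a path in the graph $\Gamma^n$ such that $|p(u_0)-p(u_1)|\ge\alpha$ and $|q(u_{k-1})-q(u_k)|\ge\alpha$, then $k>l$.
   Context: An array on three points is a triple $a_1,a_2,a_3$ of points in the plane with $a_1\ne a_2$, $a_2\ne a_3$, such that the segments $[a_1;a_2]$ and $[a_2;a_3]$ are each parallel to a coordinate axis and are mutually orthogonal. Let $p,q:\mathbb R^2\to\mathbb R$ be $p(x,y)=x$, $q(x,y)=y$. For $n\in\mathbb N$ the graph $\Gamma^n$ is defined as follows: its vertex set $V(\Gamma^n)$ consists of all lattice points $(i/2^n,j/2^n)$, $i,j\in\mathbb Z$, such that the square $[i/2^n;(i+1)/2^n)\times[j/2^n;(j+1)/2^n)$ meets $K$; its edges are all two-element sets $\{u_1,u_2\}$ of vertices with $|p(u_1)-p(u_2)|\le 1/2^n$ or $|q(u_1)-q(u_2)|\le 1/2^n$. A path of length $k$ is a sequence $u_0,u_1,\dots,u_k$ of pairwise distinct vertices such that each two consecutive ones form an edge. *)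

theory Defs
  imports "HOL-Analysis.Analysis"
begin

definition p :: "real \<times> real \<Rightarrow> real" where "p z = fst z"
definition q :: "real \<times> real \<Rightarrow> real" where "q z = snd z"

definition array3 :: "real \<times> real \<Rightarrow> real \<times> real \<Rightarrow> real \<times> real \<Rightarrow> bool" where
  "array3 a1 a2 a3 \<longleftrightarrow> a1 \<noteq> a2 \<and> a2 \<noteq> a3 \<and>
     ((p a1 = p a2 \<and> q a2 = q a3) \<or> (q a1 = q a2 \<and> p a2 = p a3))"

definition Gamma_V :: "(real \<times> real) set \<Rightarrow> nat \<Rightarrow> (real \<times> real) set" where
  "Gamma_V K n = {(of_int i / 2^n, of_int j / 2^n) | i j :: int.
      ({of_int i / 2^n ..< (of_int i + 1) / 2^n} \<times> {of_int j / 2^n ..< (of_int j + 1) / 2^n}) \<inter> K \<noteq> {}}"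

definition Gamma_E :: "(real \<times> real) set \<Rightarrow> nat \<Rightarrow> real \<times> real \<Rightarrow> real \<times> real \<Rightarrow> bool" where
  "Gamma_E K n u1 u2 \<longleftrightarrow> u1 \<in> Gamma_V K n \<and> u2 \<in> Gamma_V K n \<and> u1 \<noteq> u2 \<and>
     (\<bar>p u1 - p u2\<bar> \<le> 1 / 2^n \<or> \<bar>q u1 - q u2\<bar> \<le> 1 / 2^n)"

definition Gamma_path :: "(real \<times> real) set \<Rightarrow> nat \<Rightarrow> (nat \<Rightarrow> real \<times> real) \<Rightarrow> nat \<Rightarrow> bool" where
  "Gamma_path K n u k \<longleftrightarrow> (\<forall>i\<le>k. u i \<in> Gamma_V K n) \<and> inj_on u {0..k} \<and>
     (\<forall>i<k. Gamma_E K n (u i) (u (Suc i)))"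

end

theory Submission
  imports Defs
begin

text \<open>Suppose that for some \<open>l\<close> and \<open>\<alpha> > 0\<close> there are such paths of length at most \<open>l\<close> in
  \<open>\<Gamma>\<^sup>n\<close> for infinitely many \<open>n\<close>; then there are paths of one fixed length \<open>k\<close> along a
  sequence of levels tending to infinity. Every vertex of \<open>\<Gamma>\<^sup>n\<close> lies within \<open>2/2\<^sup>n\<close> of \<open>K\<close>,
  so by compactness a subsequence of these paths converges vertexwise to points
  \<open>w\<^sub>0, \<dots>, w\<^sub>k\<close> of \<open>K\<close>. In the limit consecutive points share a coordinate, the first step
  is horizontal and the last one vertical. At the first vertical step \<open>w\<^sub>j w\<^bsub>j+1\<^esub>\<close>, all of
  \<open>w\<^sub>0, \<dots>, w\<^sub>j\<close> lie on one horizontal line, and one of \<open>w\<^sub>0, w\<^sub>1\<close> differs from \<open>w\<^sub>j\<close>; it forms an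
  array on three points with \<open>w\<^sub>j\<close> and \<open>w\<^bsub>j+1\<^esub>\<close>.\<close>

lemma tendsto_p [tendsto_intros]: "(f \<longlongrightarrow> a) F \<Longrightarrow> ((\<lambda>x. p (f x)) \<longlongrightarrow> p a) F"
  unfolding p_def by (rule tendsto_fst)

lemma tendsto_q [tendsto_intros]: "(f \<longlongrightarrow> a) F \<Longrightarrow> ((\<lambda>x. q (f x)) \<longlongrightarrow> q a) F"
  unfolding q_def by (rule tendsto_snd)

lemma array3_in_axis_parallel_chain:
  assumes steps: "\<forall>i<k. p (w i) = p (w (Suc i)) \<or> q (w i) = q (w (Suc i))"
    and first: "p (w 0) \<noteq> p (w 1)"
    and last: "q (w (k - 1)) \<noteq> q (w k)"
  shows "\<exists>a\<in>w ` {..k}. \<exists>b\<in>w ` {..k}. \<exists>c\<in>w ` {..k}. array3 a b c"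
proof -
  define vertical where "vertical i \<longleftrightarrow> i < k \<and> q (w i) \<noteq> q (w (Suc i))" for i
  have "k \<noteq> 0" using last by (cases "k = 0") auto
  then have "vertical (k - 1)" using last by (simp add: vertical_def)
  have "q (w 0) = q (w 1)" using steps first \<open>k \<noteq> 0\<close> by auto
  define j where "j = (LEAST i. vertical i)"
  have j: "vertical j" using LeastI \<open>vertical (k - 1)\<close> unfolding j_def .
  have "j \<noteq> 0" using j \<open>q (w 0) = q (w 1)\<close> by (auto simp: vertical_def intro!: gr0I)
  have horizontal_before_j: "q (w i) = q (w j)" if "i \<le> j" for i
    using that
  proof (induction rule: inc_induct)
    case (step i)
    then have "\<not> vertical i" unfolding j_def by (meson not_less_Least)
    with step j show ?case by (auto simp: vertical_def)
  qed simp
  have "q (w 0) = q (w j)" "q (w 1) = q (w j)"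
    using horizontal_before_j[of 0] horizontal_before_j[of 1] \<open>j \<noteq> 0\<close> by simp_all
  then obtain a where a: "a \<in> {w 0, w 1}" "p a \<noteq> p (w j)" "q a = q (w j)"
    using first by (metis insertCI)
  moreover have "p (w j) = p (w (Suc j))" using steps j by (auto simp: vertical_def)
  ultimately have "array3 a (w j) (w (Suc j))"
    using j unfolding array3_def vertical_def by auto
  moreover have "a \<in> w ` {..k}" "w j \<in> w ` {..k}" "w (Suc j) \<in> w ` {..k}"
    using a(1) j \<open>j \<noteq> 0\<close> by (auto simp: vertical_def)
  ultimately show ?thesis by blast
qed

lemma seq_compact_tuple_convergent_subseq:
  fixes f :: "nat \<Rightarrow> nat \<Rightarrow> 'a::topological_space"
  assumes "seq_compact K" and "\<And>n i. i \<le> m \<Longrightarrow> f n i \<in> K"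
  shows "\<exists>r w. strict_mono r \<and> (\<forall>i\<le>m. w i \<in> K \<and> (\<lambda>n. f (r n) i) \<longlonglongrightarrow> w i)"
  using assms(2)
proof (induction m)
  case 0
  then obtain l r where "l \<in> K" "strict_mono r" "((\<lambda>n. f n 0) \<circ> r) \<longlonglongrightarrow> l"
    using seq_compactE[OF assms(1), of "\<lambda>n. f n 0"] by blast
  then show ?case by (intro exI[of _ r] exI[of _ "\<lambda>_. l"]) (simp add: o_def)
next
  case (Suc m)
  then obtain r w where r: "strict_mono r" and w: "\<forall>i\<le>m. w i \<in> K \<and> (\<lambda>n. f (r n) i) \<longlonglongrightarrow> w i"
    by fastforce
  obtain l r' where l: "l \<in> K" "strict_mono r'" "((\<lambda>n. f (r n) (Suc m)) \<circ> r') \<longlonglongrightarrow> l"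
    using seq_compactE[OF assms(1), of "\<lambda>n. f (r n) (Suc m)"] Suc.prems by blast
  have "(\<lambda>n. f (r (r' n)) i) \<longlonglongrightarrow> w i" if "i \<le> m" for i
    using LIMSEQ_subseq_LIMSEQ[OF _ l(2), of "\<lambda>n. f (r n) i"] w that by (simp add: o_def)
  moreover have "strict_mono (r \<circ> r')" using r l(2) by (rule strict_mono_o)
  ultimately show ?case
    using l w by (intro exI[of _ "r \<circ> r'"] exI[of _ "w(Suc m := l)"]) (auto simp: le_Suc_eq o_def)
qed

lemma Gamma_V_near_K:
  assumes "v \<in> Gamma_V K n"
  obtains c where "c \<in> K" "dist v c \<le> 2 / 2 ^ n"
proof -
  obtain i j :: int where v: "v = (of_int i / 2 ^ n, of_int j / 2 ^ n)" and
    "({of_int i / 2 ^ n ..< (of_int i + 1) / 2 ^ n} \<times> {of_int j / 2 ^ n ..< (of_int j + 1) / 2 ^ n}) \<inter> K \<noteq> {}"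
    using assms unfolding Gamma_V_def by blast
  then obtain x y where xy: "(x, y) \<in> K"
    "of_int i / 2 ^ n \<le> x" "x < (of_int i + 1) / 2 ^ n" "of_int j / 2 ^ n \<le> y" "y < (of_int j + 1) / 2 ^ n"
    by auto
  have "dist v (x, y) \<le> dist (of_int i / 2 ^ n) x + dist (of_int j / 2 ^ n) y"
    unfolding v dist_norm by (metis norm_Pair_le diff_Pair)
  also have "\<dots> \<le> 2 / 2 ^ n"
    using xy(2-5) by (simp add: dist_real_def add_divide_distrib)
  finally show ?thesis using xy(1) that by blast
qed

lemma divide_power2_strict_mono_tendsto_zero:
  "strict_mono L \<Longrightarrow> (\<lambda>m. c / 2 ^ L m :: real) \<longlonglongrightarrow> 0"
  using LIMSEQ_subseq_LIMSEQ[OF LIMSEQ_divide_realpow_zero] by (simp add: o_def)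

lemma Gamma_V_convergent_subseq:
  fixes U :: "nat \<Rightarrow> nat \<Rightarrow> real \<times> real"
  assumes "compact K" and "strict_mono L" and "\<And>m i. i \<le> k \<Longrightarrow> U m i \<in> Gamma_V K (L m)"
  shows "\<exists>r w. strict_mono r \<and> (\<forall>i\<le>k. w i \<in> K \<and> (\<lambda>m. U (r m) i) \<longlonglongrightarrow> w i)"
proof -
  define C where "C m i = (SOME c. c \<in> K \<and> dist (U m i) c \<le> 2 / 2 ^ L m)" for m i
  have C: "C m i \<in> K \<and> dist (U m i) (C m i) \<le> 2 / 2 ^ L m" if "i \<le> k" for m i
  proof -
    have "\<exists>c. c \<in> K \<and> dist (U m i) c \<le> 2 / 2 ^ L m" using assms(3)[OF that] by (metis Gamma_V_near_K)
    then show ?thesis unfolding C_def by (rule someI_ex)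
  qed
  obtain r w where r: "strict_mono r" and w: "\<forall>i\<le>k. w i \<in> K \<and> (\<lambda>m. C (r m) i) \<longlonglongrightarrow> w i"
    using seq_compact_tuple_convergent_subseq[OF compact_imp_seq_compact[OF assms(1)], of k C] C
    by blast
  have mesh: "(\<lambda>m. 2 / 2 ^ L (r m) :: real) \<longlonglongrightarrow> 0"
    using divide_power2_strict_mono_tendsto_zero[OF strict_mono_o[OF assms(2) r]] by (simp add: o_def)
  have "(\<lambda>m. U (r m) i) \<longlonglongrightarrow> w i" if "i \<le> k" for i
  proof (rule tendsto_dist_iff[THEN iffD2], rule Lim_null_comparison)
    have "(\<lambda>m. C (r m) i) \<longlonglongrightarrow> w i" using w that by blast
    then show "(\<lambda>m. 2 / 2 ^ L (r m) + dist (C (r m) i) (w i)) \<longlonglongrightarrow> 0"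
      by (intro tendsto_add_zero mesh tendsto_dist_iff[THEN iffD1])
    have "dist (U (r m) i) (w i) \<le> 2 / 2 ^ L (r m) + dist (C (r m) i) (w i)" for m
      using C[OF that, of "r m"] dist_triangle[of "U (r m) i" "w i" "C (r m) i"] by linarith
    then show "\<forall>\<^sub>F m in sequentially. norm (dist (U (r m) i) (w i)) \<le> 2 / 2 ^ L (r m) + dist (C (r m) i) (w i)"
      by simp
  qed
  then show ?thesis using r w by blast
qed

lemma axis_aligned_limit:
  assumes "F \<noteq> bot" and "(a \<longlongrightarrow> a0) F" and "(b \<longlongrightarrow> b0) F" and "(e \<longlongrightarrow> 0) F"
    and "\<forall>\<^sub>F x in F. \<bar>p (a x) - p (b x)\<bar> \<le> e x \<or> \<bar>q (a x) - q (b x)\<bar> \<le> e x"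
  shows "p a0 = p b0 \<or> q a0 = q b0"
proof -
  have "min \<bar>p a0 - p b0\<bar> \<bar>q a0 - q b0\<bar> \<le> 0"
  proof (rule tendsto_le[OF assms(1,4)])
    show "((\<lambda>x. min \<bar>p (a x) - p (b x)\<bar> \<bar>q (a x) - q (b x)\<bar>) \<longlongrightarrow> min \<bar>p a0 - p b0\<bar> \<bar>q a0 - q b0\<bar>) F"
      using assms(2,3) by (intro tendsto_intros)
    show "\<forall>\<^sub>F x in F. min \<bar>p (a x) - p (b x)\<bar> \<bar>q (a x) - q (b x)\<bar> \<le> e x"
      using assms(5) by (rule eventually_mono) linarith
  qed
  then show ?thesis by linarith
qed

definition turning_path :: "(real \<times> real) set \<Rightarrow> nat \<Rightarrow> real \<Rightarrow> (nat \<Rightarrow> real \<times> real) \<Rightarrow> nat \<Rightarrow> bool"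
  where "turning_path K n \<alpha> u k \<longleftrightarrow> Gamma_path K n u k \<and> 1 \<le> k \<and>
    \<alpha> \<le> \<bar>p (u 0) - p (u 1)\<bar> \<and> \<alpha> \<le> \<bar>q (u (k - 1)) - q (u k)\<bar>"

lemma turning_paths_limit:
  fixes U :: "nat \<Rightarrow> nat \<Rightarrow> real \<times> real"
  assumes "compact K" and "strict_mono L" and "\<And>m. turning_path K (L m) \<alpha> (U m) k"
  obtains w where "w ` {..k} \<subseteq> K"
    and "\<forall>i<k. p (w i) = p (w (Suc i)) \<or> q (w i) = q (w (Suc i))"
    and "\<alpha> \<le> \<bar>p (w 0) - p (w 1)\<bar>" and "\<alpha> \<le> \<bar>q (w (k - 1)) - q (w k)\<bar>"
proof -
  have paths: "\<And>m. Gamma_path K (L m) (U m) k" and "1 \<le> k"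
    and first: "\<And>m. \<alpha> \<le> \<bar>p (U m 0) - p (U m 1)\<bar>"
    and last: "\<And>m. \<alpha> \<le> \<bar>q (U m (k - 1)) - q (U m k)\<bar>"
    using assms(3) unfolding turning_path_def by blast+
  obtain r w where r: "strict_mono r" and w: "\<forall>i\<le>k. w i \<in> K \<and> (\<lambda>m. U (r m) i) \<longlonglongrightarrow> w i"
    using Gamma_V_convergent_subseq[OF assms(1,2)] paths unfolding Gamma_path_def by blast
  then have lim: "(\<lambda>m. U (r m) i) \<longlonglongrightarrow> w i" if "i \<le> k" for i
    using that by blast
  have mesh: "(\<lambda>m. 1 / 2 ^ L (r m) :: real) \<longlonglongrightarrow> 0"
    using divide_power2_strict_mono_tendsto_zero[OF strict_mono_o[OF assms(2) r]] by (simp add: o_def)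
  have "w ` {..k} \<subseteq> K" using w by auto
  moreover have "\<forall>i<k. p (w i) = p (w (Suc i)) \<or> q (w i) = q (w (Suc i))"
  proof (intro allI impI)
    fix i assume "i < k"
    have "Gamma_E K (L (r m)) (U (r m) i) (U (r m) (Suc i))" for m
      using paths \<open>i < k\<close> unfolding Gamma_path_def by blast
    then show "p (w i) = p (w (Suc i)) \<or> q (w i) = q (w (Suc i))"
      using \<open>i < k\<close> by (intro axis_aligned_limit[OF _ lim lim mesh]) (auto simp: Gamma_E_def)
  qed
  moreover have "\<alpha> \<le> \<bar>p (w 0) - p (w 1)\<bar>"
  proof (rule tendsto_lowerbound)
    show "(\<lambda>m. \<bar>p (U (r m) 0) - p (U (r m) 1)\<bar>) \<longlonglongrightarrow> \<bar>p (w 0) - p (w 1)\<bar>"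
      using \<open>1 \<le> k\<close> by (intro tendsto_intros lim) auto
  qed (intro always_eventually allI first, simp)
  moreover have "\<alpha> \<le> \<bar>q (w (k - 1)) - q (w k)\<bar>"
  proof (rule tendsto_lowerbound)
    show "(\<lambda>m. \<bar>q (U (r m) (k - 1)) - q (U (r m) k)\<bar>) \<longlonglongrightarrow> \<bar>q (w (k - 1)) - q (w k)\<bar>"
      by (intro tendsto_intros lim) auto
  qed (intro always_eventually allI last, simp)
  ultimately show ?thesis by (rule that)
qed

lemma subseq_with_constant_bounded_index:
  fixes P :: "nat \<Rightarrow> nat \<Rightarrow> bool"
  assumes "\<forall>N. \<exists>n\<ge>N. \<exists>k\<le>l. P n k"
  obtains k and L :: "nat \<Rightarrow> nat" where "strict_mono L" and "\<forall>m. P (L m) k"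
proof -
  have "\<exists>\<^sub>F n in sequentially. \<exists>k\<in>{..l}. P n k"
    using assms unfolding frequently_sequentially by (metis atMost_iff)
  then obtain k where "\<exists>\<^sub>F n in sequentially. P n k"
    using frequently_bex_finite[OF finite_atMost] by blast
  then have "infinite {n. P n k}"
    unfolding frequently_sequentially infinite_nat_iff_unbounded_le by simp
  from infinite_enumerate[OF this] show ?thesis using that by blast
qed

theorem mainTheorem2:
  fixes K :: "(real \<times> real) set"
  assumes "compact K"
    and "\<not> (\<exists>a1 a2 a3. a1 \<in> K \<and> a2 \<in> K \<and> a3 \<in> K \<and> array3 a1 a2 a3)"
  shows "\<forall>(l::nat) (\<alpha>::real). \<alpha> > 0 \<longrightarrow> (\<exists>n0::nat. \<forall>n\<ge>n0. \<forall>u k.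
           Gamma_path K n u k \<and> 1 \<le> k \<and> \<bar>p (u 0) - p (u 1)\<bar> \<ge> \<alpha> \<and> \<bar>q (u (k - 1)) - q (u k)\<bar> \<ge> \<alpha>
           \<longrightarrow> k > l)"
proof -
  have "\<not> (\<forall>N. \<exists>n\<ge>N. \<exists>k\<le>l. \<exists>u. turning_path K n \<alpha> u k)" if "\<alpha> > 0" for l :: nat and \<alpha> :: real
  proof
    assume "\<forall>N. \<exists>n\<ge>N. \<exists>k\<le>l. \<exists>u. turning_path K n \<alpha> u k"
    then obtain k and L :: "nat \<Rightarrow> nat" where L: "strict_mono L" and "\<forall>m. \<exists>u. turning_path K (L m) \<alpha> u k"
      by (rule subseq_with_constant_bounded_index)
    then obtain U where "\<And>m. turning_path K (L m) \<alpha> (U m) k"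
      unfolding choice_iff by blast
    then obtain w where "w ` {..k} \<subseteq> K"
      and steps: "\<forall>i<k. p (w i) = p (w (Suc i)) \<or> q (w i) = q (w (Suc i))"
      and "\<alpha> \<le> \<bar>p (w 0) - p (w 1)\<bar>" and "\<alpha> \<le> \<bar>q (w (k - 1)) - q (w k)\<bar>"
      by (rule turning_paths_limit[OF assms(1) L])
    moreover from this(3,4) \<open>\<alpha> > 0\<close> have "p (w 0) \<noteq> p (w 1)" "q (w (k - 1)) \<noteq> q (w k)"
      by auto
    ultimately show False
      using array3_in_axis_parallel_chain[OF steps] assms(2) by blast
  qed
  then show ?thesis unfolding turning_path_def by (meson not_le)
qed

end
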